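(* Let $n$ be a positive integer, $b_0,\dots,b_{n-1},\beta_0,\dots,\beta_{n-1}\in\mathbb R$, and \[ \widetilde\Delta(z)=z^n+\sum_{k=0}^{n-1}b_kz^k+e^{-z}\sum_{k=0}^{n-1}\beta_kz^k,\quad z\in\mathbb C. \] Then $0$ is a root of multiplicity $2n$ of $\widetilde\Delta$ if and only if, for every $k\in\{0,\dots,n-1\}$, \[ b_k=(-1)^{n-k}\frac{n!}{k!}\binom{2n-k-1}{n-1},\qquad \beta_k=(-1)^{n-1}\frac{(2n-k-1)!}{k!\,(n-k-1)!}. \]
   Context: A root $z_0$ of $\widetilde\Delta$ has multiplicity $2n$ when $\widetilde\Delta^{(k)}(z_0)=0$ for $k=0,\dots,2n-1$ (multiplicity can be at most $2n$ for this quasipolynomial). *)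

theory Defs
  imports "HOL-Complex_Analysis.Complex_Analysis"
begin

definition Delta_tilde :: "nat \<Rightarrow> (nat \<Rightarrow> real) \<Rightarrow> (nat \<Rightarrow> real) \<Rightarrow> complex \<Rightarrow> complex" where
  "Delta_tilde n b \<beta> z = z ^ n + (\<Sum>k<n. complex_of_real (b k) * z ^ k)
      + exp (- z) * (\<Sum>k<n. complex_of_real (\<beta> k) * z ^ k)"

definition root_of_mult :: "(complex \<Rightarrow> complex) \<Rightarrow> complex \<Rightarrow> nat \<Rightarrow> bool" where
  "root_of_mult f z0 m \<longleftrightarrow> (\<forall>k<m. (deriv ^^ k) f z0 = 0)"

end

theory Submission
  imports Defs
begin

text \<open>
  Write \<open>P = z\<^sup>n + \<Sum> b\<^sub>k z\<^sup>k\<close> and \<open>Q = \<Sum> \<beta>\<^sub>k z\<^sup>k\<close>. Multiplying by the unit \<open>e\<^sup>z\<close>, the root condition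
  says that \<open>e\<^sup>z P + Q\<close> vanishes to order \<open>2n\<close>; as \<open>deg Q < n\<close>, this means that the coefficients
  \<open>n, \<dots>, 2n - 1\<close> of \<open>e\<^sup>z P\<close> vanish and that \<open>Q\<close> is minus the part of \<open>e\<^sup>z P\<close> below degree \<open>n\<close>,
  i.e. \<open>-Q/P\<close> is the \<open>[n-1/n]\<close> Pade approximant of \<open>e\<^sup>z\<close>.

  Vandermonde's convolution exhibits one such \<open>P\<^sub>0\<close>: the \<open>m\<close>-th coefficient of \<open>e\<^sup>z P\<^sub>0\<close> is
  \<open>n!/m! \<cdot> (m - n gchoose n)\<close>, which vanishes for \<open>n \<le> m < 2n\<close>. It is the only one: for
  \<open>G = P - P\<^sub>0\<close>, of degree \<open>< n\<close>, and \<open>D\<close> the formal derivative, the series \<open>D\<^sup>n (e\<^sup>z G) = e\<^sup>z (D + 1)\<^sup>n G\<close> vanishes to order \<open>n\<close>,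
  hence so does \<open>(D + 1)\<^sup>n G\<close>; but \<open>(D + 1)\<^sup>n\<close> preserves the top coefficient of \<open>G\<close>.
\<close>

lemma fps_nth_poly_sum:
  "(\<Sum>k<n. fps_const (c k) * fps_X ^ k) $ m = (if m < n then c m else (0 :: 'a::comm_ring_1))"
  by (simp add: fps_sum_nth if_distrib [of "times _"] sum.delta cong: if_cong)

lemma fps_mult_nth_eq_0_below:
  fixes G H :: "'a::comm_semiring_0 fps"
  assumes "\<forall>m<N. G $ m = 0" "m < N"
  shows "(H * G) $ m = 0"
  unfolding fps_mult_nth using assms by (intro sum.neutral) auto

lemma fps_exp_mult_nth_eq_0_below_iff:
  fixes F :: "'a::field_char_0 fps"
  shows "(\<forall>m<N. (fps_exp c * F) $ m = 0) \<longleftrightarrow> (\<forall>m<N. F $ m = 0)"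
proof
  assume "\<forall>m<N. (fps_exp c * F) $ m = 0"
  then have "\<forall>m<N. (fps_exp (- c) * (fps_exp c * F)) $ m = 0"
    using fps_mult_nth_eq_0_below by blast
  then show "\<forall>m<N. F $ m = 0"
    by (simp add: mult.assoc [symmetric] fps_exp_add_mult [symmetric])
qed (use fps_mult_nth_eq_0_below in blast)

lemma fps_higher_deriv_nth:
  fixes F :: "'a::field_char_0 fps"
  shows "(fps_deriv ^^ k) F $ j = fact (j + k) / fact j * F $ (j + k)"
proof (induction k arbitrary: j)
  case (Suc k)
  have "(fps_deriv ^^ Suc k) F $ j = of_nat (j + 1) * (fps_deriv ^^ k) F $ (j + 1)"
    by simp
  also have "\<dots> = fact (j + Suc k) / fact j * F $ (j + Suc k)"
    by (simp only: Suc) (simp add: fact_Suc field_simps del: of_nat_Suc)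
  finally show ?case .
qed simp

lemma root_of_mult_iff_fps_nth:
  assumes "f has_fps_expansion F"
  shows "root_of_mult f 0 m \<longleftrightarrow> (\<forall>k<m. F $ k = 0)"
  unfolding root_of_mult_def fps_nth_fps_expansion [OF assms] by simp

definition fps_deriv_plus_id :: "'a::comm_semiring_1 fps \<Rightarrow> 'a fps" where
  "fps_deriv_plus_id F = fps_deriv F + F"

lemma fps_higher_deriv_exp_mult:
  fixes F :: "'a::field_char_0 fps"
  shows "(fps_deriv ^^ k) (fps_exp 1 * F) = fps_exp 1 * (fps_deriv_plus_id ^^ k) F"
  by (induction k) (simp_all add: fps_deriv_plus_id_def algebra_simps)

lemma fps_deriv_plus_id_funpow_nth_top:
  fixes F :: "'a::comm_semiring_1 fps"
  assumes "\<forall>m>d. F $ m = 0" "d \<le> m"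
  shows "(fps_deriv_plus_id ^^ k) F $ m = F $ m"
  using assms(2)
proof (induction k arbitrary: m)
  case (Suc k)
  then show ?case using assms(1) by (simp add: fps_deriv_plus_id_def)
qed simp


lemma fps_exp_mult_gap_imp_zero:
  fixes G :: "'a::field_char_0 fps"
  assumes deg: "\<forall>m\<ge>n. G $ m = 0"
    and gap: "\<forall>m. n \<le> m \<and> m < 2 * n \<longrightarrow> (fps_exp 1 * G) $ m = 0"
  shows "G = 0"
proof (rule ccontr)
  assume "G \<noteq> 0"
  define d where "d = Max {m. G $ m \<noteq> 0}"
  have sub: "{m. G $ m \<noteq> 0} \<subseteq> {..<n}"
    using deg by (auto simp flip: not_le)
  then have fin: "finite {m. G $ m \<noteq> 0}"
    by (rule finite_subset) simp
  have "{m. G $ m \<noteq> 0} \<noteq> {}"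
    using \<open>G \<noteq> 0\<close> by (auto simp: fps_eq_iff)
  with fin have "d \<in> {m. G $ m \<noteq> 0}"
    unfolding d_def by (rule Max_in)
  with sub have "G $ d \<noteq> 0" "d < n"
    by auto
  have top: "\<forall>m>d. G $ m = 0"
    using Max_ge[OF fin] unfolding d_def by (auto simp flip: not_le)
  have "\<forall>j<n. (fps_deriv ^^ n) (fps_exp 1 * G) $ j = 0"
    using gap by (simp add: fps_higher_deriv_nth)
  then have "\<forall>j<n. (fps_deriv_plus_id ^^ n) G $ j = 0"
    by (simp add: fps_higher_deriv_exp_mult fps_exp_mult_nth_eq_0_below_iff)
  moreover have "(fps_deriv_plus_id ^^ n) G $ d = G $ d"
    using top by (rule fps_deriv_plus_id_funpow_nth_top) simp
  ultimately show False
    using \<open>d < n\<close> \<open>G $ d \<noteq> 0\<close> by simp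
qed

definition exp_pade_denom :: "nat \<Rightarrow> nat \<Rightarrow> 'a::field_char_0" where
  "exp_pade_denom n k = (if k \<le> n then fact n / fact k * ((- of_nat n) gchoose (n - k)) else 0)"

definition exp_pade_numer :: "nat \<Rightarrow> nat \<Rightarrow> 'a::field_char_0" where
  "exp_pade_numer n k = (if k < n then - (fact n / fact k * ((of_nat k - of_nat n) gchoose n)) else 0)"

lemma exp_pade_denom_self [simp]: "exp_pade_denom n n = 1"
  by (simp add: exp_pade_denom_def)

lemma exp_pade_denom_eq_0 [simp]: "n < k \<Longrightarrow> exp_pade_denom n k = 0"
  by (simp add: exp_pade_denom_def)

lemma fps_exp_mult_exp_pade_denom_nth:
  "(fps_exp 1 * Abs_fps (exp_pade_denom n)) $ m
     = fact n / fact m * ((of_nat m - of_nat n) gchoose n :: 'a::field_char_0)"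
proof -
  define h :: "nat \<Rightarrow> 'a" where
    "h i = (of_nat m gchoose i) * (if i \<le> n then (- of_nat n) gchoose (n - i) else 0)" for i
  have h_eq_0: "h i = 0" if "m < i \<or> n < i" for i
    using that by (auto simp: h_def binomial_gbinomial [symmetric])
  have "(fps_exp 1 * Abs_fps (exp_pade_denom n)) $ m = (\<Sum>i=0..m. exp_pade_denom n i / fact (m - i))"
    by (simp add: mult.commute [of "fps_exp 1"] fps_mult_nth)
  also have "\<dots> = (\<Sum>i=0..m. fact n / fact m * h i)"
  proof (rule sum.cong [OF refl])
    fix i assume "i \<in> {0..m}"
    then have "(of_nat m gchoose i :: 'a) = fact m / (fact i * fact (m - i))"
      by (simp add: binomial_gbinomial [symmetric] binomial_fact)
    then show "exp_pade_denom n i / fact (m - i) = fact n / fact m * h i"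
      by (simp add: exp_pade_denom_def h_def field_simps)
  qed
  also have "\<dots> = fact n / fact m * (\<Sum>i=0..m. h i)"
    by (rule sum_distrib_left [symmetric])
  also have "(\<Sum>i=0..m. h i) = (\<Sum>i=0..m + n. h i)"
    by (rule sum.mono_neutral_left) (auto intro: h_eq_0)
  also have "\<dots> = (\<Sum>i=0..n. h i)"
    by (rule sum.mono_neutral_right) (auto intro: h_eq_0)
  also have "\<dots> = (\<Sum>i=0..n. (of_nat m gchoose i) * ((- of_nat n) gchoose (n - i)))"
    by (simp add: h_def)
  also have "\<dots> = (of_nat m - of_nat n) gchoose n"
    by (simp add: gbinomial_Vandermonde)
  finally show ?thesis .
qed

lemma fps_exp_mult_exp_pade_denom_gap:
  assumes "n \<le> m" "m < 2 * n"
  shows "(fps_exp 1 * Abs_fps (exp_pade_denom n)) $ m = (0 :: 'a::field_char_0)"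
proof -
  have "(of_nat m - of_nat n :: 'a) gchoose n = of_nat ((m - n) choose n)"
    using assms(1) by (simp add: binomial_gbinomial of_nat_diff)
  also have "(m - n) choose n = 0"
    using assms by simp
  finally show ?thesis
    by (simp add: fps_exp_mult_exp_pade_denom_nth)
qed

lemma exp_mult_gap_iff_exp_pade_denom:
  fixes P :: "'a::field_char_0 fps"
  assumes monic: "P $ n = 1" and deg: "\<forall>m>n. P $ m = 0"
  shows "(\<forall>m. n \<le> m \<and> m < 2 * n \<longrightarrow> (fps_exp 1 * P) $ m = 0)
           \<longleftrightarrow> P = Abs_fps (exp_pade_denom n)"
proof
  assume gap: "\<forall>m. n \<le> m \<and> m < 2 * n \<longrightarrow> (fps_exp 1 * P) $ m = 0"
  have "P - Abs_fps (exp_pade_denom n) = 0"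
  proof (rule fps_exp_mult_gap_imp_zero)
    show "\<forall>m\<ge>n. (P - Abs_fps (exp_pade_denom n)) $ m = 0"
      using monic deg by (auto simp: le_less)
    show "\<forall>m. n \<le> m \<and> m < 2 * n \<longrightarrow> (fps_exp 1 * (P - Abs_fps (exp_pade_denom n))) $ m = 0"
      using gap by (simp add: right_diff_distrib fps_exp_mult_exp_pade_denom_gap)
  qed
  then show "P = Abs_fps (exp_pade_denom n)"
    by simp
qed (simp add: fps_exp_mult_exp_pade_denom_gap)

lemma exp_quasipoly_vanishing_iff:
  fixes P Q :: "'a::field_char_0 fps"
  assumes monic: "P $ n = 1" and P_deg: "\<forall>m>n. P $ m = 0" and Q_deg: "\<forall>m\<ge>n. Q $ m = 0"
  shows "(\<forall>m<2 * n. (P + fps_exp (-1) * Q) $ m = 0) \<longleftrightarrow>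
    (\<forall>k<n. P $ k = exp_pade_denom n k \<and> Q $ k = exp_pade_numer n k)"
proof -
  have "fps_exp 1 * (P + fps_exp (-1) * Q) = fps_exp 1 * P + Q"
    by (simp add: distrib_left mult.assoc [symmetric] fps_exp_add_mult [symmetric])
  then have "(\<forall>m<2 * n. (P + fps_exp (-1) * Q) $ m = 0) \<longleftrightarrow> (\<forall>m<2 * n. (fps_exp 1 * P + Q) $ m = 0)"
    using fps_exp_mult_nth_eq_0_below_iff [of "2 * n" 1 "P + fps_exp (-1) * Q"] by simp
  also have "\<dots> \<longleftrightarrow> (\<forall>m. n \<le> m \<and> m < 2 * n \<longrightarrow> (fps_exp 1 * P) $ m = 0)
                    \<and> (\<forall>k<n. Q $ k = - (fps_exp 1 * P) $ k)"
    using Q_deg by (auto simp: eq_neg_iff_add_eq_0 add.commute) (metis add_0 not_le)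
  also have "\<dots> \<longleftrightarrow> P = Abs_fps (exp_pade_denom n) \<and> (\<forall>k<n. Q $ k = - (fps_exp 1 * P) $ k)"
    by (simp add: exp_mult_gap_iff_exp_pade_denom [OF monic P_deg])
  also have "\<dots> \<longleftrightarrow> (\<forall>k<n. P $ k = exp_pade_denom n k \<and> Q $ k = exp_pade_numer n k)"
  proof -
    have "P = Abs_fps (exp_pade_denom n) \<longleftrightarrow> (\<forall>k<n. P $ k = exp_pade_denom n k)"
      using monic P_deg by (auto simp: fps_eq_iff) (metis exp_pade_denom_eq_0 exp_pade_denom_self linorder_neqE_nat)
    then show ?thesis
      by (auto simp: fps_exp_mult_exp_pade_denom_nth exp_pade_numer_def)
  qed
  finally show ?thesis .
qed

lemma exp_pade_denom_closed_form:
  assumes "k < n"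
  shows "exp_pade_denom n k
           = ((-1) ^ (n - k) * (fact n / fact k) * of_nat ((2 * n - k - 1) choose (n - 1)) :: 'a::field_char_0)"
proof -
  have "(- of_nat n :: 'a) gchoose (n - k) = (-1) ^ (n - k) * (of_nat (2 * n - k - 1) gchoose (n - k))"
    using assms by (subst gbinomial_negated_upper) (simp add: of_nat_diff)
  also have "(2 * n - k - 1) choose (n - k) = (2 * n - k - 1) choose (n - 1)"
    using assms binomial_symmetric [of "n - 1" "2 * n - k - 1"] by simp
  then have "(of_nat (2 * n - k - 1) gchoose (n - k) :: 'a) = of_nat ((2 * n - k - 1) choose (n - 1))"
    by (metis binomial_gbinomial)
  finally show ?thesis
    using assms by (simp add: exp_pade_denom_def)
qed

lemma exp_pade_numer_closed_form:
  assumes "k < n"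
  shows "exp_pade_numer n k
           = ((-1) ^ (n - 1) * fact (2 * n - k - 1) / (fact k * fact (n - k - 1)) :: 'a::field_char_0)"
proof -
  have "(of_nat k - of_nat n :: 'a) gchoose n = (-1) ^ n * (of_nat (2 * n - k - 1) gchoose n)"
    using assms by (subst gbinomial_negated_upper) (simp add: of_nat_diff)
  also have "(of_nat (2 * n - k - 1) gchoose n :: 'a) = of_nat ((2 * n - k - 1) choose n)"
    by (rule binomial_gbinomial [symmetric])
  also have "\<dots> = fact (2 * n - k - 1) / (fact n * fact (n - k - 1))"
  proof -
    have "n \<le> 2 * n - k - 1" "2 * n - k - 1 - n = n - k - 1"
      using assms by linarith+
    then show ?thesis
      by (simp add: binomial_fact)
  qed
  also have "(-1 :: 'a) ^ n = - ((-1) ^ (n - 1))"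
    using assms by (cases n) auto
  finally show ?thesis
    using assms by (simp add: exp_pade_numer_def field_simps)
qed

lemma of_real_exp_pade_denom:
  "of_real (exp_pade_denom n k) = (exp_pade_denom n k :: 'a::{real_field, field_char_0})"
proof (cases "k < n")
  case True
  then show ?thesis
    by (simp add: exp_pade_denom_closed_form)
next
  case False
  then show ?thesis
    by (cases "k = n") simp_all
qed

lemma of_real_exp_pade_numer:
  "of_real (exp_pade_numer n k) = (exp_pade_numer n k :: 'a::{real_field, field_char_0})"
proof (cases "k < n")
  case True
  then show ?thesis
    by (simp add: exp_pade_numer_closed_form)
qed (simp add: exp_pade_numer_def)

theorem lemma4p3:
  fixes n :: nat and b \<beta> :: "nat \<Rightarrow> real"
  assumes "n > 0"
  shows "root_of_mult (Delta_tilde n b \<beta>) 0 (2 * n) \<longleftrightarrow>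
    (\<forall>k<n. b k = (-1) ^ (n - k) * (fact n / fact k) * real ((2 * n - k - 1) choose (n - 1))
          \<and> \<beta> k = (-1) ^ (n - 1) * fact (2 * n - k - 1) / (fact k * fact (n - k - 1)))"
proof -
  define P :: "complex fps" where "P = fps_X ^ n + (\<Sum>k<n. fps_const (of_real (b k)) * fps_X ^ k)"
  define Q :: "complex fps" where "Q = (\<Sum>k<n. fps_const (of_real (\<beta> k)) * fps_X ^ k)"
  have "Delta_tilde n b \<beta> has_fps_expansion P + fps_exp (-1) * Q"
    unfolding Delta_tilde_def [abs_def] P_def Q_def by (intro fps_expansion_intros)
  then have "root_of_mult (Delta_tilde n b \<beta>) 0 (2 * n) \<longleftrightarrow> (\<forall>m<2 * n. (P + fps_exp (-1) * Q) $ m = 0)"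
    by (rule root_of_mult_iff_fps_nth)
  also have "\<dots> \<longleftrightarrow> (\<forall>k<n. P $ k = exp_pade_denom n k \<and> Q $ k = exp_pade_numer n k)"
    by (rule exp_quasipoly_vanishing_iff) (simp_all add: P_def Q_def fps_nth_poly_sum)
  also have "\<dots> \<longleftrightarrow> (\<forall>k<n. b k = exp_pade_denom n k \<and> \<beta> k = exp_pade_numer n k)"
    by (simp add: P_def Q_def fps_nth_poly_sum
        flip: of_real_exp_pade_denom [where 'a = complex] of_real_exp_pade_numer [where 'a = complex])
  also have "\<dots> \<longleftrightarrow> (\<forall>k<n. b k = (-1) ^ (n - k) * (fact n / fact k) * real ((2 * n - k - 1) choose (n - 1))
          \<and> \<beta> k = (-1) ^ (n - 1) * fact (2 * n - k - 1) / (fact k * fact (n - k - 1)))"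
    by (simp add: exp_pade_denom_closed_form exp_pade_numer_closed_form)
  finally show ?thesis .
qed

end
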